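(* Let $G$ be a connected threshold graph of order $n\ge 4$ and size $m$ with $n-1<m<\binom{n}{2}$, with backwards zero position sequence $(b_1,\ldots,b_z)$ and numbers $F_p$ as in the context. Let $B\in\mathbb{R}^{z\times z}$ be given by $B_{ij}=b_{\max\{i,j\}}$, $w=(b_1,\ldots,b_z)^\intercal$, and let $\lambda_1,\ldots,\lambda_z$ be the eigenvalues of $B$ with corresponding orthonormal eigenvectors $x_1,\ldots,x_z$. Then \[F_p=\sum_{i=1}^z (w^\intercal x_i)^2\,\lambda_i^{p-1}\qquad(p\in\mathbb{N}).\]
   Context: A threshold graph is a simple graph whose vertices can be ordered $v_1,\ldots,v_n$ so that for each $2\le i\le n$, $v_i$ is either adjacent to all of $v_1,\ldots,v_{i-1}$ (then $a_i=1$) or to none of them (then $a_i=0$); by convention $a_1=1$. Vertex $v_i$ is of type 1 if $a_i=1$ and of type 0 if $a_i=0$; $c$ and $z$ are the numbers of type 1 and type 0 vertices. The backwards zero position sequence $(b_1,\ldots,b_z)$ is defined by letting $b_i$ be the number of type 1 vertices appearing after the $i$-th type 0 vertex in the order $v_1,\ldots,v_n$. For $p\ge1$, $F_p=\sum_{i_1,\ldots,i_p=1}^{z} b_{i_1}\min\{b_{i_1},b_{i_2}\}\cdots\min\{b_{i_{p-1}},b_{i_p}\}\,b_{i_p}$ (with $F_1=\sum_i b_i^2$). *)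

theory Defs
  imports "Jordan_Normal_Form.Matrix" "HOL-Library.FuncSet"
begin

text \<open>A threshold graph is given by its creation sequence a = [a_1,...,a_n]
  (0-based list; True = type 1, False = type 0), with a_1 = 1 by convention.\<close>

definition thr_adj :: "bool list \<Rightarrow> nat \<Rightarrow> nat \<Rightarrow> bool" where
  "thr_adj a i j \<longleftrightarrow> i < length a \<and> j < length a \<and> i \<noteq> j \<and> a ! (max i j)"

definition thr_order :: "bool list \<Rightarrow> nat" where
  "thr_order a = length a"

definition thr_size :: "bool list \<Rightarrow> nat" where
  "thr_size a = card {(i, j). i < j \<and> thr_adj a i j}"

definition thr_connected :: "bool list \<Rightarrow> bool" where
  "thr_connected a \<longleftrightarrow> (\<forall>i < length a. \<forall>j < length a. (thr_adj a)\<^sup>*\<^sup>* i j)"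

definition zero_pos :: "bool list \<Rightarrow> nat list" where
  "zero_pos a = filter (\<lambda>k. \<not> a ! k) [0..<length a]"

definition num_zeros :: "bool list \<Rightarrow> nat" where
  "num_zeros a = length (zero_pos a)"

text \<open>Backwards zero position sequence, 0-based: bzp a i = b_(i+1).\<close>
definition bzp :: "bool list \<Rightarrow> nat \<Rightarrow> nat" where
  "bzp a i = card {k. zero_pos a ! i < k \<and> k < length a \<and> a ! k}"

definition Fp :: "bool list \<Rightarrow> nat \<Rightarrow> nat" where
  "Fp a p = (\<Sum>f \<in> PiE {..<p} (\<lambda>_. {..<num_zeros a}).
     bzp a (f 0) * (\<Prod>k<p - 1. min (bzp a (f k)) (bzp a (f (Suc k)))) * bzp a (f (p - 1)))"

definition Bmat :: "bool list \<Rightarrow> real mat" where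
  "Bmat a = mat (num_zeros a) (num_zeros a) (\<lambda>(i, j). real (bzp a (max i j)))"

definition wvec :: "bool list \<Rightarrow> real vec" where
  "wvec a = vec (num_zeros a) (\<lambda>i. real (bzp a i))"

end

theory Submission
  imports Defs "Jordan_Normal_Form.Determinant"
begin

(* Since b is non-increasing, min {b_i, b_j} = b_max(i,j) = B_ij, so F_p sums the weights
   w_(i_1) B_(i_1 i_2) ... B_(i_(p-1) i_p) w_(i_p) over all index sequences, i.e. F_p = w^T B^(p-1) w.
   Expanding w in the orthonormal eigenbasis gives B^(p-1) w = sum_i (w^T x_i) lambda_i^(p-1) x_i,
   and pairing with w yields the formula. *)

lemma sum_PiE_insert:
  assumes "finite S" "finite Z" "k \<notin> S"
  shows "(\<Sum>f\<in>PiE (insert k S) (\<lambda>_. Z). g f) = (\<Sum>h\<in>PiE S (\<lambda>_. Z). \<Sum>y\<in>Z. g (h(k := y)))"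
proof -
  have "(\<Sum>f\<in>PiE (insert k S) (\<lambda>_. Z). g f) = (\<Sum>(y, h)\<in>Z \<times> PiE S (\<lambda>_. Z). g (h(k := y)))"
    unfolding PiE_insert_eq
    by (subst sum.reindex[OF inj_combinator[OF assms(3)]]) (simp_all add: comp_def split_def)
  also have "\<dots> = (\<Sum>h\<in>PiE S (\<lambda>_. Z). \<Sum>y\<in>Z. g (h(k := y)))"
    by (simp add: sum.cartesian_product[symmetric] sum.swap[of _ Z])
  finally show ?thesis .
qed

lemma scalar_prod_eq_sum:
  "w \<in> carrier_vec n \<Longrightarrow> u \<bullet> w = (\<Sum>r<n. u $ r * w $ r)"
  by (simp add: scalar_prod_def lessThan_atLeast0)

lemma index_mult_mat_vec_eq_sum:
  "A \<in> carrier_mat m n \<Longrightarrow> v \<in> carrier_vec n \<Longrightarrow> j < m \<Longrightarrow> (A *\<^sub>v v) $ j = (\<Sum>r<n. A $$ (j, r) * v $ r)"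
  by (simp add: scalar_prod_eq_sum)

lemma sum_walks_eq_scalar_prod_pow_mat:
  fixes A :: "'a::comm_semiring_1 mat"
  assumes A: "A \<in> carrier_mat n n" and v: "v \<in> carrier_vec n"
  shows "(\<Sum>f\<in>PiE {..<Suc k} (\<lambda>_. {..<n}). u $ f 0 * (\<Prod>j<k. A $$ (f j, f (Suc j))) * v $ f k)
         = u \<bullet> (A ^\<^sub>m k *\<^sub>v v)"
  using v
proof (induction k arbitrary: v)
  case 0
  have "(\<Sum>f\<in>PiE {..<Suc 0} (\<lambda>_. {..<n}). u $ f 0 * v $ f 0) = (\<Sum>y<n. u $ y * v $ y)"
    using sum_PiE_insert[of "{}" "{..<n}" 0 "\<lambda>f. u $ f 0 * v $ f 0"] by (simp add: lessThan_Suc)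
  then show ?case
    using A 0 by (simp add: scalar_prod_eq_sum[of v n])
next
  case (Suc k)
  let ?walk = "\<lambda>h. u $ h 0 * (\<Prod>j<k. A $$ (h j, h (Suc j)))"
  have extend: "?walk (h(Suc k := y)) * A $$ ((h(Suc k := y)) k, (h(Suc k := y)) (Suc k))
      * v $ (h(Suc k := y)) (Suc k) = ?walk h * A $$ (h k, y) * v $ y" for h y
  proof -
    have "(\<Prod>j<k. A $$ ((h(Suc k := y)) j, (h(Suc k := y)) (Suc j))) = (\<Prod>j<k. A $$ (h j, h (Suc j)))"
      by (intro prod.cong) auto
    then show ?thesis by simp
  qed
  have "{..<Suc (Suc k)} = insert (Suc k) {..<Suc k}" by auto
  then have "(\<Sum>f\<in>PiE {..<Suc (Suc k)} (\<lambda>_. {..<n}). ?walk f * A $$ (f k, f (Suc k)) * v $ f (Suc k))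
      = (\<Sum>h\<in>PiE {..<Suc k} (\<lambda>_. {..<n}). \<Sum>y<n. ?walk h * A $$ (h k, y) * v $ y)"
    by (simp only: sum_PiE_insert[OF finite_lessThan finite_lessThan] lessThan_iff less_irrefl
        not_False_eq_True extend)
  also have "\<dots> = (\<Sum>h\<in>PiE {..<Suc k} (\<lambda>_. {..<n}). ?walk h * (A *\<^sub>v v) $ h k)"
  proof (intro sum.cong refl)
    fix h assume "h \<in> PiE {..<Suc k} (\<lambda>_. {..<n})"
    then have "h k < n" by auto
    then show "(\<Sum>y<n. ?walk h * A $$ (h k, y) * v $ y) = ?walk h * (A *\<^sub>v v) $ h k"
      by (simp add: index_mult_mat_vec_eq_sum[OF A Suc.prems] sum_distrib_left mult.assoc)
  qed
  also have "\<dots> = u \<bullet> (A ^\<^sub>m k *\<^sub>v (A *\<^sub>v v))"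
    using Suc.IH A Suc.prems by simp
  also have "\<dots> = u \<bullet> (A ^\<^sub>m Suc k *\<^sub>v v)"
    using assoc_mult_mat_vec[OF pow_carrier_mat[OF A] A Suc.prems] by simp
  finally show ?case
    by (simp add: prod.lessThan_Suc mult.assoc)
qed

lemma pow_mat_mult_vec_eigenvector:
  fixes A :: "'a::field mat"
  assumes A: "A \<in> carrier_mat n n" and x: "x \<in> carrier_vec n" and eig: "A *\<^sub>v x = l \<cdot>\<^sub>v x"
  shows "A ^\<^sub>m k *\<^sub>v x = l ^ k \<cdot>\<^sub>v x"
proof (induction k)
  case 0
  show ?case using A x by simp
next
  case (Suc k)
  have "A ^\<^sub>m Suc k *\<^sub>v x = A ^\<^sub>m k *\<^sub>v (l \<cdot>\<^sub>v x)"
    using assoc_mult_mat_vec[OF pow_carrier_mat[OF A] A x] eig by simp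
  also have "\<dots> = l \<cdot>\<^sub>v (l ^ k \<cdot>\<^sub>v x)"
    using mult_mat_vec[OF pow_carrier_mat[OF A] x] Suc.IH by simp
  finally show ?case
    by (simp add: smult_smult_assoc mult.commute)
qed

lemma orthonormal_completeness:
  fixes x :: "nat \<Rightarrow> 'a::field vec"
  assumes x: "\<And>i. i < n \<Longrightarrow> x i \<in> carrier_vec n"
    and ortho: "\<And>i j. i < n \<Longrightarrow> j < n \<Longrightarrow> x i \<bullet> x j = (if i = j then 1 else 0)"
    and rs: "r < n" "s < n"
  shows "(\<Sum>i<n. x i $ r * x i $ s) = (if r = s then 1 else 0)"
proof -
  define X where "X = mat n n (\<lambda>(r, i). x i $ r)"
  have X: "X \<in> carrier_mat n n"
    by (simp add: X_def)
  have col_X: "col X i = x i" if "i < n" for i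
    using x[OF that] that by (auto simp: X_def intro!: eq_vecI)
  have "transpose_mat X * X = 1\<^sub>m n"
  proof (rule eq_matI)
    fix i j assume "i < dim_row (1\<^sub>m n)" "j < dim_col (1\<^sub>m n)"
    then show "(transpose_mat X * X) $$ (i, j) = 1\<^sub>m n $$ (i, j)"
      using X col_X ortho by simp
  qed (use X in simp_all)
  then have "X * transpose_mat X = 1\<^sub>m n"
    using mat_mult_left_right_inverse[of "transpose_mat X" n X] X by simp
  then have "(X * transpose_mat X) $$ (r, s) = (if r = s then 1 else 0)"
    using rs by simp
  then show ?thesis
    using X rs by (simp add: X_def scalar_prod_eq_sum)
qed

lemma orthonormal_expansion:
  fixes x :: "nat \<Rightarrow> 'a::field vec"
  assumes x: "\<And>i. i < n \<Longrightarrow> x i \<in> carrier_vec n"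
    and ortho: "\<And>i j. i < n \<Longrightarrow> j < n \<Longrightarrow> x i \<bullet> x j = (if i = j then 1 else 0)"
    and w: "w \<in> carrier_vec n" and j: "j < n"
  shows "w $ j = (\<Sum>i<n. (w \<bullet> x i) * x i $ j)"
proof -
  have "(\<Sum>i<n. (w \<bullet> x i) * x i $ j) = (\<Sum>i<n. \<Sum>r<n. w $ r * (x i $ r * x i $ j))"
    by (intro sum.cong refl) (simp add: scalar_prod_eq_sum[OF x] sum_distrib_right mult.assoc)
  also have "\<dots> = (\<Sum>r<n. w $ r * (\<Sum>i<n. x i $ r * x i $ j))"
    by (subst sum.swap) (simp add: sum_distrib_left)
  also have "\<dots> = (\<Sum>r<n. w $ r * (if r = j then 1 else 0))"
    using orthonormal_completeness[OF x ortho _ j] by simp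
  also have "\<dots> = w $ j"
    using j by (simp add: if_distrib cong: if_cong)
  finally show ?thesis ..
qed

lemma scalar_prod_pow_mat_mult_vec_orthonormal_eigenbasis:
  fixes A :: "'a::field mat"
  assumes A: "A \<in> carrier_mat n n"
    and x: "\<And>i. i < n \<Longrightarrow> x i \<in> carrier_vec n"
    and eig: "\<And>i. i < n \<Longrightarrow> A *\<^sub>v x i = lam i \<cdot>\<^sub>v x i"
    and ortho: "\<And>i j. i < n \<Longrightarrow> j < n \<Longrightarrow> x i \<bullet> x j = (if i = j then 1 else 0)"
    and w: "w \<in> carrier_vec n"
  shows "u \<bullet> (A ^\<^sub>m k *\<^sub>v w) = (\<Sum>i<n. (u \<bullet> x i) * (w \<bullet> x i) * lam i ^ k)"
proof -
  let ?P = "A ^\<^sub>m k"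
  have P: "?P \<in> carrier_mat n n"
    using A by simp
  have Pw: "(?P *\<^sub>v w) $ j = (\<Sum>i<n. (w \<bullet> x i) * lam i ^ k * x i $ j)" if j: "j < n" for j
  proof -
    have "(?P *\<^sub>v w) $ j = (\<Sum>r<n. ?P $$ (j, r) * (\<Sum>i<n. (w \<bullet> x i) * x i $ r))"
      using orthonormal_expansion[OF x ortho w] by (simp add: index_mult_mat_vec_eq_sum[OF P w j])
    also have "\<dots> = (\<Sum>i<n. \<Sum>r<n. (w \<bullet> x i) * (?P $$ (j, r) * x i $ r))"
      by (subst sum.swap) (simp add: sum_distrib_left mult.left_commute)
    also have "\<dots> = (\<Sum>i<n. (w \<bullet> x i) * (\<Sum>r<n. ?P $$ (j, r) * x i $ r))"
      by (simp add: sum_distrib_left)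
    also have "\<dots> = (\<Sum>i<n. (w \<bullet> x i) * (?P *\<^sub>v x i) $ j)"
      using x by (simp add: index_mult_mat_vec_eq_sum[OF P _ j])
    also have "\<dots> = (\<Sum>i<n. (w \<bullet> x i) * lam i ^ k * x i $ j)"
      using j by (intro sum.cong refl)
        (simp add: pow_mat_mult_vec_eigenvector[OF A x eig] carrier_vecD[OF x] mult.assoc)
    finally show ?thesis .
  qed
  have "u \<bullet> (?P *\<^sub>v w) = (\<Sum>j<n. u $ j * (\<Sum>i<n. (w \<bullet> x i) * lam i ^ k * x i $ j))"
    using P w Pw by (simp add: scalar_prod_eq_sum[of _ n])
  also have "\<dots> = (\<Sum>i<n. \<Sum>j<n. (w \<bullet> x i) * lam i ^ k * (u $ j * x i $ j))"
    by (subst sum.swap) (simp add: sum_distrib_left mult_ac)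
  also have "\<dots> = (\<Sum>i<n. (w \<bullet> x i) * lam i ^ k * (\<Sum>j<n. u $ j * x i $ j))"
    by (simp add: sum_distrib_left)
  also have "\<dots> = (\<Sum>i<n. (u \<bullet> x i) * (w \<bullet> x i) * lam i ^ k)"
    by (intro sum.cong refl) (simp add: scalar_prod_eq_sum[OF x])
  finally show ?thesis .
qed

lemma bzp_antimono:
  assumes "i \<le> j" "j < num_zeros a"
  shows "bzp a j \<le> bzp a i"
proof -
  have "sorted_wrt (<) (zero_pos a)"
    unfolding zero_pos_def by (rule sorted_wrt_filter) simp
  then have "zero_pos a ! i \<le> zero_pos a ! j"
    using assms by (auto simp: sorted_wrt_nth_less num_zeros_def le_less)
  then show ?thesis
    unfolding bzp_def by (intro card_mono) auto
qed

lemma min_bzp_eq_bzp_max: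
  assumes "i < num_zeros a" "j < num_zeros a"
  shows "min (bzp a i) (bzp a j) = bzp a (max i j)"
  using assms bzp_antimono[of i j a] bzp_antimono[of j i a]
  by (cases "i \<le> j") (auto simp: min_def max_def)

lemma Fp_eq_scalar_prod_pow_Bmat:
  "real (Fp a (Suc k)) = wvec a \<bullet> (Bmat a ^\<^sub>m k *\<^sub>v wvec a)"
proof -
  let ?z = "num_zeros a"
  have "real (Fp a (Suc k)) = (\<Sum>f\<in>PiE {..<Suc k} (\<lambda>_. {..<?z}).
          wvec a $ f 0 * (\<Prod>j<k. Bmat a $$ (f j, f (Suc j))) * wvec a $ f k)"
    unfolding Fp_def of_nat_sum
  proof (intro sum.cong refl)
    fix f assume f: "f \<in> PiE {..<Suc k} (\<lambda>_. {..<?z})"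
    have f_lt: "f j < ?z" if "j \<le> k" for j
      using PiE_mem[OF f, of j] that by simp
    have "real (min (bzp a (f j)) (bzp a (f (Suc j)))) = Bmat a $$ (f j, f (Suc j))" if "j < k" for j
      using f_lt[of j] f_lt[of "Suc j"] that by (simp add: min_bzp_eq_bzp_max Bmat_def)
    then have "real (\<Prod>j<k. min (bzp a (f j)) (bzp a (f (Suc j)))) = (\<Prod>j<k. Bmat a $$ (f j, f (Suc j)))"
      unfolding of_nat_prod by (intro prod.cong) auto
    then show "real (bzp a (f 0) * (\<Prod>j<Suc k - 1. min (bzp a (f j)) (bzp a (f (Suc j))))
                 * bzp a (f (Suc k - 1)))
             = wvec a $ f 0 * (\<Prod>j<k. Bmat a $$ (f j, f (Suc j))) * wvec a $ f k"
      by (simp add: f_lt wvec_def)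
  qed
  also have "\<dots> = wvec a \<bullet> (Bmat a ^\<^sub>m k *\<^sub>v wvec a)"
    by (rule sum_walks_eq_scalar_prod_pow_mat) (simp_all add: Bmat_def wvec_def)
  finally show ?thesis .
qed

theorem corollaryA2:
  fixes a :: "bool list" and lam :: "nat \<Rightarrow> real" and x :: "nat \<Rightarrow> real vec" and p :: nat
  assumes first: "a \<noteq> [] \<and> a ! 0"
    and conn: "thr_connected a"
    and order: "thr_order a \<ge> 4"
    and size_lo: "thr_order a - 1 < thr_size a"
    and size_hi: "thr_size a < thr_order a choose 2"
    and evec: "\<And>i. i < num_zeros a \<Longrightarrow>
                 x i \<in> carrier_vec (num_zeros a) \<and> Bmat a *\<^sub>v x i = lam i \<cdot>\<^sub>v x i"
    and orthonormal: "\<And>i j. i < num_zeros a \<Longrightarrow> j < num_zeros a \<Longrightarrow>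
                 x i \<bullet> x j = (if i = j then 1 else 0)"
    and p: "p \<ge> 1"
  shows "real (Fp a p) = (\<Sum>i<num_zeros a. (wvec a \<bullet> x i)^2 * lam i ^ (p - 1))"
proof -
  obtain k where k: "p = Suc k"
    using p by (cases p) auto
  have B: "Bmat a \<in> carrier_mat (num_zeros a) (num_zeros a)" and w: "wvec a \<in> carrier_vec (num_zeros a)"
    by (simp_all add: Bmat_def wvec_def)
  have "real (Fp a p) = wvec a \<bullet> (Bmat a ^\<^sub>m k *\<^sub>v wvec a)"
    unfolding k by (rule Fp_eq_scalar_prod_pow_Bmat)
  also have "\<dots> = (\<Sum>i<num_zeros a. (wvec a \<bullet> x i) * (wvec a \<bullet> x i) * lam i ^ k)"
    using evec orthonormal by (intro scalar_prod_pow_mat_mult_vec_orthonormal_eigenbasis[OF B _ _ _ w]) auto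
  finally show ?thesis
    by (simp add: k power2_eq_square)
qed

end
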